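(* Let $X$ be a real Banach space and let $C \subset X$ be a closed, convex and bounded set with $0 \in \mathrm{int}(C)$. Let $\{x_n\}_{n \in \mathbb{N}}$ be a dense subset of the boundary $\partial C$ of $C$ such that for every $n$ there is exactly one functional $f_n \in X^*$ with $\|f_n\| = 1$ supporting $C$ at $x_n$; i.e. $f_n(x_n) = d_n$ and $f_n(v) \le d_n$ for all $v \in C$. Put $D_n = \{x \in X : f_n(x) \le d_n\}$. Then $C = \bigcap_{n \in \mathbb{N}} D_n$. *)

theory Defs
  imports "HOL-Analysis.Analysis"
begin

end

theory Submission
  imports Defs
begin

(* If y lies outside C, the segment from the interior point 0 to y leaves C at some z = t y with
   0 < t < 1.  A sample point x n close to z has a supporting functional f n with f n z close to
   d n.  On the other hand f n z = t f n y <= t d n, and d n >= r whenever the ball of radius r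
   about 0 lies in C.  These bounds are incompatible once dist (x n) z < (1 - t) r. *)

lemma radius_mult_onorm_le_upper_bound:
  fixes g :: "'a::real_normed_vector \<Rightarrow> real"
  assumes g: "bounded_linear g" and "r > 0" and "ball 0 r \<subseteq> C" and "\<forall>v\<in>C. g v \<le> c"
  shows "r * onorm g \<le> c"
proof -
  have "closed {v. g v \<le> c}"
    using g by (intro closed_Collect_le continuous_intros) (auto intro: linear_continuous_on)
  then have "closure (ball 0 r) \<subseteq> {v. g v \<le> c}"
    using assms(3,4) by (intro closure_minimal) auto
  then have cball_le: "g v \<le> c" if "norm v \<le> r" for v
    using \<open>r > 0\<close> that by auto
  have "\<bar>g w\<bar> \<le> c / r * norm w" for w
  proof (cases "w = 0")
    case True
    then show ?thesis
      using cball_le[of 0] \<open>r > 0\<close> linear_simps[OF g] by simp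
  next
    case False
    define s where "s = r / norm w"
    have "norm (s *\<^sub>R w) \<le> r" "norm (- (s *\<^sub>R w)) \<le> r"
      using False \<open>r > 0\<close> by (auto simp: s_def)
    then have "s * g w \<le> c" "- (s * g w) \<le> c"
      using cball_le[of "s *\<^sub>R w"] cball_le[of "- (s *\<^sub>R w)"] by (simp_all add: linear_simps[OF g])
    then have "s * \<bar>g w\<bar> \<le> c"
      using \<open>r > 0\<close> by (simp add: s_def abs_if)
    then show ?thesis
      using False \<open>r > 0\<close> by (simp add: s_def field_simps)
  qed
  then have "onorm g \<le> c / r"
    by (intro onorm_bound) (use \<open>r > 0\<close> cball_le[of 0] linear_simps[OF g] in auto)
  then show ?thesis
    using \<open>r > 0\<close> by (simp add: field_simps)
qed

lemma scaled_in_frontier_if_not_in: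
  fixes C :: "'a::real_normed_vector set"
  assumes "closed C" and "0 \<in> interior C" and "y \<notin> C"
  obtains t where "0 < t" "t < 1" "t *\<^sub>R y \<in> frontier C"
proof -
  have "closed_segment 0 y \<inter> frontier C \<noteq> {}"
    using assms interior_subset by (intro connected_Int_frontier) auto
  then obtain t where t: "0 \<le> t" "t \<le> 1" "t *\<^sub>R y \<in> frontier C"
    by (auto simp: closed_segment_def)
  have "t \<noteq> 0"
    using t(3) assms(2) by (auto simp: frontier_def)
  moreover have "t \<noteq> 1"
    using t(3) assms(1,3) frontier_subset_closed by (metis scaleR_one subsetD)
  ultimately show ?thesis
    using t by (intro that) auto
qed

lemma Inter_halfspaces_subset_if_dense_supports:
  fixes C :: "'a::real_normed_vector set"
    and x :: "'i \<Rightarrow> 'a" and f :: "'i \<Rightarrow> 'a \<Rightarrow> real" and d :: "'i \<Rightarrow> real"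
  assumes "closed C" and "0 \<in> interior C"
    and dense: "frontier C \<subseteq> closure (range x)"
    and f: "\<And>n. bounded_linear (f n)" "\<And>n. onorm (f n) = 1"
    and supp: "\<And>n. f n (x n) = d n" "\<And>n. \<forall>v\<in>C. f n v \<le> d n"
  shows "{y. \<forall>n. f n y \<le> d n} \<subseteq> C"
proof
  fix y assume y: "y \<in> {y. \<forall>n. f n y \<le> d n}"
  show "y \<in> C"
  proof (rule ccontr)
    assume "y \<notin> C"
    obtain r where r: "r > 0" "ball 0 r \<subseteq> C"
      using \<open>0 \<in> interior C\<close> by (meson mem_interior)
    obtain t where t: "0 < t" "t < 1" and z: "t *\<^sub>R y \<in> frontier C"
      using scaled_in_frontier_if_not_in[OF \<open>closed C\<close> \<open>0 \<in> interior C\<close> \<open>y \<notin> C\<close>] .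
    have "t *\<^sub>R y \<in> closure (range x)" and "(1 - t) * r > 0"
      using z dense t r by auto
    then obtain n where n: "dist (x n) (t *\<^sub>R y) < (1 - t) * r"
      unfolding closure_approachable by blast
    have "r \<le> d n"
      using radius_mult_onorm_le_upper_bound[OF f(1) r supp(2)] f(2) by simp
    have "\<bar>f n (t *\<^sub>R y) - f n (x n)\<bar> \<le> dist (x n) (t *\<^sub>R y)"
      using onorm[OF f(1)[of n], of "t *\<^sub>R y - x n"] f(2)
      by (simp add: linear_simps[OF f(1)] dist_norm norm_minus_commute)
    then have "d n - (1 - t) * r < t * f n y"
      using n supp(1) linear_simps[OF f(1)] by simp
    moreover have "t * f n y \<le> t * d n"
      using y t by simp
    moreover have "(1 - t) * r \<le> (1 - t) * d n"
      using \<open>r \<le> d n\<close> t by simp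
    ultimately show False
      by (simp add: algebra_simps)
  qed
qed

theorem lemma12:
  fixes C :: "'a::banach set"
    and x :: "nat \<Rightarrow> 'a"
    and f :: "nat \<Rightarrow> 'a \<Rightarrow> real"
    and d :: "nat \<Rightarrow> real"
    and D :: "nat \<Rightarrow> 'a set"
  assumes "closed C" and "convex C" and "bounded C"
    and "0 \<in> interior C"
    and "range x \<subseteq> frontier C"
    and "frontier C \<subseteq> closure (range x)"
    and "\<And>n. bounded_linear (f n) \<and> onorm (f n) = 1 \<and> f n (x n) = d n \<and> (\<forall>v\<in>C. f n v \<le> d n)"
    and "\<And>n g. bounded_linear g \<Longrightarrow> onorm g = 1 \<Longrightarrow> (\<forall>v\<in>C. g v \<le> g (x n)) \<Longrightarrow> g = f n"
    and "\<And>n. D n = {y. f n y \<le> d n}"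
  shows "C = (\<Inter>n. D n)"
proof
  show "C \<subseteq> (\<Inter>n. D n)"
    using assms(7,9) by auto
  have "(\<Inter>n. D n) = {y. \<forall>n. f n y \<le> d n}"
    using assms(9) by auto
  also have "\<dots> \<subseteq> C"
    using assms(1,4,6,7) by (intro Inter_halfspaces_subset_if_dense_supports) auto
  finally show "(\<Inter>n. D n) \<subseteq> C" .
qed

end
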